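(* Let $X$ be a complete metric space, $f : X \to X$ a continuous map and $x \in X$. Then the following are equivalent: (i) The map $f{\uparrow}_x : \mathbb{N} \to X$, $n \mapsto f^n(x)$, can be extended to a continuous map $\widehat{f{\uparrow}_x} : \widehat{\mathbb{N}} \to X$. (ii) For every $s \in \widehat{\mathbb{Z}}$ and every sequence of positive integers $(n_i)_{i \in \mathbb{N}}$ with $n_i \to +\infty$ in $\mathbb{R}$ and $\widehat{n_i} \to s$ in $\widehat{\mathbb{Z}}$ as $i \to \infty$, the limit $\lim_{i \to \infty} f^{n_i}(x)$ exists in $X$ and depends only on $s$.
   Context: $\mathbb{N} = \{1,2,3,\dots\}$, $f^n$ is the $n$-th iterate of $f$, $\widehat{\mathbb{Z}} = \varprojlim_n \mathbb{Z}/n\mathbb{Z}$, and $\widehat{\cdot}:\mathbb{N} \to \widehat{\mathbb{Z}}$ is the natural embedding. $\widehat{\mathbb{N}}$ is the profinite completion of $(\mathbb{N},+)$: the projective limit (with projective limit topology, each term discrete) of the finite semigroups $\mathbb{Z}_{m,n}$ with underlying set $\{1,\dots,m-1\} \sqcup \mathbb{Z}/n\mathbb{Z}$ and quotient maps $\pi_{m,n}:\mathbb{N} \to \mathbb{Z}_{m,n}$ ($a \mapsto a$ if $a<m$, $a \mapsto a \bmod n$ if $a\ge m$). As a set $\widehat{\mathbb{N}} = \mathbb{N} \sqcup \widehat{\mathbb{Z}}$, $\mathbb{N}$ embeds via $n \mapsto (\pi_{m,n}(n))$, and a sequence of positive integers $(n_i)$ converges to $s \in \widehat{\mathbb{Z}}$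 in $\widehat{\mathbb{N}}$ iff $n_i \to \infty$ in $\mathbb{R}$ and $\widehat{n_i} \to s$ in $\widehat{\mathbb{Z}}$. *)

theory Defs
  imports "HOL-Analysis.Analysis"
begin

text \<open>Zhat is the projective limit of the discrete finite rings Z/nZ (n >= 1),
 realised as the set of compatible families of residues, with the subspace topology
 of the product of discrete spaces.\<close>

definition Zhat_index :: "nat set" where
  "Zhat_index = {n. 0 < n}"

definition Zhat :: "(nat \<Rightarrow> nat) set" where
  "Zhat = {s \<in> PiE Zhat_index (\<lambda>n. {0..<n}).
            \<forall>n\<in>Zhat_index. \<forall>k\<in>Zhat_index. n dvd k \<longrightarrow> s n = s k mod n}"

definition Zhat_top :: "(nat \<Rightarrow> nat) topology" where
  "Zhat_top = subtopology (product_topology (\<lambda>n. discrete_topology {0..<n}) Zhat_index) Zhat"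

definition zhat_of :: "nat \<Rightarrow> (nat \<Rightarrow> nat)" where
  "zhat_of k = restrict (\<lambda>n. k mod n) Zhat_index"

text \<open>Index set: pairs (m,n) of positive integers. The finite semigroup Z_{m,n}
 has underlying set {1..m-1} disjoint-union Z/nZ, represented as Inl a (1 <= a < m)
 and Inr r (0 <= r < n).\<close>

definition Nhat_index :: "(nat \<times> nat) set" where
  "Nhat_index = {(m, n). 0 < m \<and> 0 < n}"

definition Zmn :: "nat \<Rightarrow> nat \<Rightarrow> (nat + nat) set" where
  "Zmn m n = Inl ` {1..<m} \<union> Inr ` {0..<n}"

definition pi_mn :: "nat \<Rightarrow> nat \<Rightarrow> nat \<Rightarrow> nat + nat" where
  "pi_mn m n a = (if a < m then Inl a else Inr (a mod n))"

fun bond :: "nat \<Rightarrow> nat \<Rightarrow> nat + nat \<Rightarrow> nat + nat" where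
  "bond m n (Inl a) = pi_mn m n a"
| "bond m n (Inr r) = Inr (r mod n)"

definition Nhat :: "(nat \<times> nat \<Rightarrow> nat + nat) set" where
  "Nhat = {u \<in> PiE Nhat_index (\<lambda>(m, n). Zmn m n).
            \<forall>m n m' n'. (m, n) \<in> Nhat_index \<longrightarrow> (m', n') \<in> Nhat_index \<longrightarrow>
               m \<le> m' \<longrightarrow> n dvd n' \<longrightarrow> u (m, n) = bond m n (u (m', n'))}"

definition Nhat_top :: "(nat \<times> nat \<Rightarrow> nat + nat) topology" where
  "Nhat_top = subtopology
     (product_topology (\<lambda>(m, n). discrete_topology (Zmn m n)) Nhat_index) Nhat"

definition nhat_of :: "nat \<Rightarrow> (nat \<times> nat \<Rightarrow> nat + nat)" where
  "nhat_of k = restrict (\<lambda>(m, n). pi_mn m n k) Nhat_index"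

end

theory Submission
  imports Defs
begin

text \<open>A point of the profinite completion \<open>Nhat\<close> is either a positive integer \<open>k\<close>,
  which is isolated, or a profinite integer \<open>s\<close>, sitting in \<open>Nhat\<close> as the family
  \<open>(m, n) \<mapsto> s mod n\<close>. The sets \<open>{v. v (N + 1, N!) = s mod N!}\<close> form a neighbourhood basis
  of \<open>s\<close>; they contain the integers \<open>n > N\<close> with \<open>n \<equiv> s (mod N!)\<close> and the profinite
  integers agreeing with \<open>s\<close> modulo \<open>N!\<close>. Hence a sequence \<open>a\<close> extends continuously iff
  \<open>a n \<rightarrow> L s\<close> uniformly along these neighbourhoods, which a diagonal argument extracts
  from sequential convergence; the values \<open>L t\<close> at nearby profinite points are controlled
  by approximating \<open>t\<close> with integers.\<close>

lemma limitin_discrete_topology: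
  "limitin (discrete_topology U) f l F \<longleftrightarrow> l \<in> U \<and> eventually (\<lambda>i. f i = l) F"
proof
  assume L: "limitin (discrete_topology U) f l F"
  then have "l \<in> U"
    using limitin_topspace by fastforce
  moreover have "eventually (\<lambda>i. f i \<in> {l}) F"
    using limitinD[OF L, of "{l}"] \<open>l \<in> U\<close> by simp
  ultimately show "l \<in> U \<and> eventually (\<lambda>i. f i = l) F"
    by simp
next
  assume "l \<in> U \<and> eventually (\<lambda>i. f i = l) F"
  then show "limitin (discrete_topology U) f l F"
    by (simp add: limitin_eventually)
qed

lemma limitin_subtopology_product_discrete:
  assumes S: "S \<subseteq> PiE I U" and f: "\<And>c. f c \<in> S"
  shows "limitin (subtopology (product_topology (\<lambda>i. discrete_topology (U i)) I) S) f l F \<longleftrightarrow>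
    l \<in> S \<and> (\<forall>i\<in>I. eventually (\<lambda>c. f c i = l i) F)"
proof -
  have "f c \<in> topspace (product_topology (\<lambda>i. discrete_topology (U i)) I)" for c
    using S f by auto
  moreover have "l \<in> extensional I \<and> (\<forall>i\<in>I. l i \<in> U i)" if "l \<in> S"
    using subsetD[OF S that] by (simp add: PiE_iff)
  ultimately show ?thesis
    unfolding limitin_subtopology limitin_componentwise limitin_discrete_topology
    using f by auto
qed

lemma filterlim_at_top_greater_id:
  fixes ns :: "nat \<Rightarrow> nat"
  assumes "\<And>i. i < ns i"
  shows "filterlim ns at_top sequentially"
  by (rule filterlim_at_top_mono[OF filterlim_ident]) (use assms in \<open>simp add: less_imp_le\<close>)

lemma Zhat_PiE: "s \<in> Zhat \<Longrightarrow> s \<in> PiE Zhat_index (\<lambda>n. {0..<n})"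
  unfolding Zhat_def by blast

lemma Zhat_less: "s \<in> Zhat \<Longrightarrow> 0 < n \<Longrightarrow> s n < n"
  using PiE_mem[OF Zhat_PiE, of s n] by (simp add: Zhat_index_def)

lemma Zhat_mod: "s \<in> Zhat \<Longrightarrow> 0 < n \<Longrightarrow> 0 < k \<Longrightarrow> n dvd k \<Longrightarrow> s n = s k mod n"
  unfolding Zhat_def Zhat_index_def by blast

lemma Zhat_extensional: "s \<in> Zhat \<Longrightarrow> s \<in> extensional Zhat_index"
  using Zhat_PiE PiE_iff by blast

lemma ZhatI:
  assumes "s \<in> extensional Zhat_index" "\<And>n. 0 < n \<Longrightarrow> s n < n"
    and "\<And>n k. 0 < n \<Longrightarrow> 0 < k \<Longrightarrow> n dvd k \<Longrightarrow> s n = s k mod n"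
  shows "s \<in> Zhat"
proof -
  have "s \<in> PiE Zhat_index (\<lambda>n. {0..<n})"
    using assms(1,2) by (auto simp: PiE_iff Zhat_index_def)
  then show ?thesis
    unfolding Zhat_def Zhat_index_def using assms(3) by blast
qed

lemma zhat_of_in_Zhat: "zhat_of k \<in> Zhat"
  by (rule ZhatI) (auto simp: zhat_of_def Zhat_index_def mod_mod_cancel)

lemma limitin_Zhat_zhat_of_iff:
  "limitin Zhat_top (\<lambda>i. zhat_of (ns i)) s sequentially \<longleftrightarrow>
     s \<in> Zhat \<and> (\<forall>q>0. eventually (\<lambda>i. ns i mod q = s q) sequentially)"
proof -
  have "Zhat \<subseteq> PiE Zhat_index (\<lambda>n. {0..<n})"
    using Zhat_PiE by blast
  from limitin_subtopology_product_discrete[OF this, of "\<lambda>i. zhat_of (ns i)"]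
  show ?thesis
    unfolding Zhat_top_def using zhat_of_in_Zhat by (simp add: zhat_of_def Zhat_index_def)
qed

lemma Zhat_approximating_seq:
  assumes t: "t \<in> Zhat"
  obtains ns where "\<forall>i. 0 < ns i" "filterlim ns at_top sequentially"
    "\<forall>q>0. eventually (\<lambda>i. ns i mod q = t q) sequentially"
proof -
  define ns where "ns i = t (fact (Suc i)) + fact (Suc i) * Suc i" for i
  have ge: "i < ns i" for i
  proof -
    have "Suc i \<le> fact (Suc i) * Suc i"
      using mult_le_mono1[OF fact_ge_1[of "Suc i"], of "Suc i"] by (simp del: fact_Suc)
    then show ?thesis
      unfolding ns_def by linarith
  qed
  have mod_eq: "ns i mod q = t q" if "0 < q" "q \<le> i" for q i
  proof -
    have q_dvd: "q dvd fact (Suc i)"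
      using that by (intro dvd_fact) auto
    then have "q dvd fact (Suc i) * Suc i"
      by (rule dvd_mult2)
    then obtain r where r: "fact (Suc i) * Suc i = q * r"
      by (elim dvdE)
    have "ns i mod q = t (fact (Suc i)) mod q"
      unfolding ns_def r by (simp del: fact_Suc)
    also have "\<dots> = t q"
      using Zhat_mod[OF t \<open>0 < q\<close> _ q_dvd] by simp
    finally show ?thesis .
  qed
  have "\<forall>q>0. eventually (\<lambda>i. ns i mod q = t q) sequentially"
  proof (intro allI impI)
    fix q :: nat
    assume "0 < q"
    show "eventually (\<lambda>i. ns i mod q = t q) sequentially"
      by (rule eventually_sequentiallyI[of q]) (rule mod_eq[OF \<open>0 < q\<close>])
  qed
  moreover have "\<forall>i. 0 < ns i"
    using ge by (metis gr0I not_less0)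
  ultimately show thesis
    using that filterlim_at_top_greater_id[OF ge] by blast
qed

lemma Nhat_PiE: "u \<in> Nhat \<Longrightarrow> u \<in> PiE Nhat_index (\<lambda>(m, n). Zmn m n)"
  unfolding Nhat_def by blast

lemma Nhat_in_Zmn: "u \<in> Nhat \<Longrightarrow> 0 < m \<Longrightarrow> 0 < n \<Longrightarrow> u (m, n) \<in> Zmn m n"
  using PiE_mem[OF Nhat_PiE, of u "(m, n)"] by (simp add: Nhat_index_def)

lemma Nhat_bond:
  "u \<in> Nhat \<Longrightarrow> 0 < m \<Longrightarrow> 0 < n \<Longrightarrow> 0 < m' \<Longrightarrow> 0 < n' \<Longrightarrow> m \<le> m' \<Longrightarrow> n dvd n'
    \<Longrightarrow> u (m, n) = bond m n (u (m', n'))"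
  unfolding Nhat_def Nhat_index_def by blast

lemma Nhat_undefined: "u \<in> Nhat \<Longrightarrow> p \<notin> Nhat_index \<Longrightarrow> u p = undefined"
  using Nhat_PiE PiE_arb by blast

lemma topspace_Nhat: "topspace Nhat_top = Nhat"
proof -
  have topspace_Zmn:
    "(\<lambda>i. topspace (case i of (m, n) \<Rightarrow> discrete_topology (Zmn m n))) = (\<lambda>(m, n). Zmn m n)"
    by (rule ext) (simp split: prod.split)
  show ?thesis
    unfolding Nhat_top_def topspace_subtopology topspace_product_topology topspace_Zmn
    using Nhat_PiE by blast
qed

lemma nhat_of_in_Nhat: "0 < k \<Longrightarrow> nhat_of k \<in> Nhat"
  unfolding Nhat_def nhat_of_def Nhat_index_def Zmn_def
  by (auto simp: pi_mn_def mod_mod_cancel)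

definition nhat_of_zhat :: "(nat \<Rightarrow> nat) \<Rightarrow> (nat \<times> nat \<Rightarrow> nat + nat)" where
  "nhat_of_zhat s = restrict (\<lambda>(m, n). Inr (s n)) Nhat_index"

lemma nhat_of_zhat_in_Nhat:
  assumes s: "s \<in> Zhat"
  shows "nhat_of_zhat s \<in> Nhat"
proof -
  have "nhat_of_zhat s \<in> PiE Nhat_index (\<lambda>(m, n). Zmn m n)"
    using Zhat_less[OF s] unfolding nhat_of_zhat_def restrict_PiE_iff
    by (auto simp: Nhat_index_def Zmn_def)
  moreover have "nhat_of_zhat s (m, n) = bond m n (nhat_of_zhat s (m', n'))"
    if "(m, n) \<in> Nhat_index" "(m', n') \<in> Nhat_index" "n dvd n'" for m n m' n'
    using that Zhat_mod[OF s, of n n'] unfolding nhat_of_zhat_def Nhat_index_def by simp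
  ultimately show ?thesis
    unfolding Nhat_def by blast
qed

lemma inj_on_nhat_of: "inj_on nhat_of {0<..}"
proof (rule inj_onI)
  fix a b :: nat
  assume "a \<in> {0<..}" "b \<in> {0<..}" "nhat_of a = nhat_of b"
  then have "nhat_of a (Suc a, 1) = nhat_of b (Suc a, 1)" "0 < b"
    by simp_all
  then show "a = b"
    unfolding nhat_of_def Nhat_index_def by (auto simp: pi_mn_def split: if_splits)
qed

lemma inj_on_nhat_of_zhat: "inj_on nhat_of_zhat Zhat"
proof (rule inj_onI)
  fix s t
  assume "s \<in> Zhat" "t \<in> Zhat" and eq: "nhat_of_zhat s = nhat_of_zhat t"
  have "s n = t n" if "n \<in> Zhat_index" for n
    using fun_cong[OF eq, of "(1, n)"] that
    by (simp add: nhat_of_zhat_def Nhat_index_def Zhat_index_def)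
  then show "s = t"
    using Zhat_extensional[OF \<open>s \<in> Zhat\<close>] Zhat_extensional[OF \<open>t \<in> Zhat\<close>]
    by (rule extensionalityI[rotated 2])
qed

lemma nhat_of_zhat_neq_nhat_of: "nhat_of_zhat s \<noteq> nhat_of k"
proof
  assume "nhat_of_zhat s = nhat_of k"
  then have "nhat_of_zhat s (Suc k, 1) = nhat_of k (Suc k, 1)" by simp
  then show False
    unfolding nhat_of_zhat_def nhat_of_def Nhat_index_def by (auto simp: pi_mn_def)
qed

lemma Nhat_Inl_eq_nhat_of:
  assumes u: "u \<in> Nhat" and m: "0 < m" and u_Inl: "u (m, 1) = Inl a"
  shows "0 < a" "u = nhat_of a"
proof -
  show a: "0 < a"
    using Nhat_in_Zmn[OF u m, of 1] u_Inl unfolding Zmn_def by auto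
  have "u (m', n') = nhat_of a (m', n')" if "0 < m'" "0 < n'" for m' n'
  proof -
    define M where "M = max (max m m') (Suc a)"
    have "u (m, 1) = bond m 1 (u (M, n'))"
      using Nhat_bond[OF u m, of 1 M n'] that unfolding M_def by auto
    then have "u (M, n') = Inl a"
      using u_Inl by (cases "u (M, n')") (auto simp: pi_mn_def split: if_splits)
    moreover have "u (m', n') = bond m' n' (u (M, n'))"
      using Nhat_bond[OF u that, of M n'] that unfolding M_def by auto
    ultimately show ?thesis
      using that unfolding nhat_of_def Nhat_index_def by auto
  qed
  then show "u = nhat_of a"
    using Nhat_undefined[OF u] by (auto simp: nhat_of_def Nhat_index_def)
qed

lemma Nhat_not_Inl_eq_nhat_of_zhat:
  assumes u: "u \<in> Nhat" and not_Inl: "\<And>m a. 0 < m \<Longrightarrow> u (m, 1) \<noteq> Inl a"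
  obtains s where "s \<in> Zhat" "u = nhat_of_zhat s"
proof
  define s where "s = restrict (\<lambda>n. projr (u (1, n))) Zhat_index"
  have u_Inr: "u (m, n) = Inr (s n) \<and> s n < n" if mn: "0 < m" "0 < n" for m n
  proof -
    obtain r where r: "u (m, n) = Inr r" "r < n"
    proof (cases "u (m, n)")
      case (Inl b)
      then have "b < m"
        using Nhat_in_Zmn[OF u mn] unfolding Zmn_def by auto
      then have "u (m, 1) = Inl b"
        using Nhat_bond[OF u \<open>0 < m\<close>, of 1 m n] mn Inl by (auto simp: pi_mn_def)
      then show ?thesis
        using not_Inl \<open>0 < m\<close> by blast
    next
      case (Inr r)
      then show ?thesis
        using that Nhat_in_Zmn[OF u mn] unfolding Zmn_def by auto
    qed
    moreover have "u (1, n) = bond 1 n (u (m, n))"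
      using Nhat_bond[OF u, of 1 n m n] mn by auto
    ultimately show ?thesis
      using mn by (simp add: s_def Zhat_index_def)
  qed
  show "s \<in> Zhat"
  proof (rule ZhatI)
    fix n k :: nat
    assume "0 < n" "0 < k" "n dvd k"
    then have "u (1, n) = bond 1 n (u (1, k))"
      using Nhat_bond[OF u, of 1 n 1 k] by auto
    then show "s n = s k mod n"
      using u_Inr[of 1 n] u_Inr[of 1 k] \<open>0 < n\<close> \<open>0 < k\<close> by simp
  qed (use u_Inr in \<open>auto simp: s_def\<close>)
  show "u = nhat_of_zhat s"
  proof
    fix p
    show "u p = nhat_of_zhat s p"
      using u_Inr Nhat_undefined[OF u, of p]
      by (cases "p \<in> Nhat_index") (auto simp: nhat_of_zhat_def Nhat_index_def)
  qed
qed

lemma Nhat_cases: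
  assumes "u \<in> Nhat"
  obtains (nat) k where "0 < k" "u = nhat_of k"
    | (profinite) s where "s \<in> Zhat" "u = nhat_of_zhat s"
  using Nhat_Inl_eq_nhat_of Nhat_not_Inl_eq_nhat_of_zhat assms by metis

lemma openin_Nhat_coordinate:
  assumes p: "p \<in> Nhat_index"
  shows "openin Nhat_top {v \<in> Nhat. v p = c}"
proof -
  let ?P = "product_topology (\<lambda>(m, n). discrete_topology (Zmn m n)) Nhat_index"
  have "openin ?P {v \<in> topspace ?P. v p \<in> {c} \<inter> Zmn (fst p) (snd p)}"
    by (rule openin_continuous_map_preimage[OF continuous_map_product_projection[OF p]])
       (auto simp: case_prod_beta)
  then have "openin Nhat_top ({v \<in> topspace ?P. v p \<in> {c} \<inter> Zmn (fst p) (snd p)} \<inter> Nhat)"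
    unfolding Nhat_top_def by (rule openin_subtopology_Int)
  moreover have "{v \<in> topspace ?P. v p \<in> {c} \<inter> Zmn (fst p) (snd p)} \<inter> Nhat = {v \<in> Nhat. v p = c}"
  proof -
    have "topspace ?P \<inter> Nhat = Nhat"
      using topspace_Nhat unfolding Nhat_top_def by simp
    moreover have "v p \<in> Zmn (fst p) (snd p)" if "v \<in> Nhat" for v
      using p Nhat_in_Zmn[OF that, of "fst p" "snd p"] unfolding Nhat_index_def by auto
    ultimately show ?thesis
      by blast
  qed
  ultimately show ?thesis
    by simp
qed

lemma openin_Nhat_nhat_of:
  assumes "0 < k"
  shows "openin Nhat_top {nhat_of k}"
proof -
  have "{v \<in> Nhat. v (Suc k, 1) = Inl k} = {nhat_of k}"
  proof (intro equalityI subsetI)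
    fix v
    assume "v \<in> {v \<in> Nhat. v (Suc k, 1) = Inl k}"
    then show "v \<in> {nhat_of k}"
      using Nhat_Inl_eq_nhat_of(2)[of v "Suc k" k] by simp
  next
    fix v
    assume "v \<in> {nhat_of k}"
    then show "v \<in> {v \<in> Nhat. v (Suc k, 1) = Inl k}"
      using nhat_of_in_Nhat[OF assms] by (simp add: nhat_of_def Nhat_index_def pi_mn_def)
  qed
  then show ?thesis
    using openin_Nhat_coordinate[of "(Suc k, 1)" "Inl k"] by (simp add: Nhat_index_def)
qed

lemma Nhat_neighbourhood_cases:
  assumes v: "v \<in> Nhat" "v (Suc N, M) = Inr r" and "0 < M"
  obtains (nat) n where "N < n" "n mod M = r" "v = nhat_of n"
    | (profinite) t where "t \<in> Zhat" "t M = r" "v = nhat_of_zhat t"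
  using \<open>v \<in> Nhat\<close>
proof (cases rule: Nhat_cases)
  case (nat n)
  then have "pi_mn (Suc N) M n = Inr r"
    using v(2) \<open>0 < M\<close> by (simp add: nhat_of_def Nhat_index_def)
  then have "N < n" "n mod M = r"
    by (auto simp: pi_mn_def split: if_splits)
  then show ?thesis
    using that(1) nat(2) by blast
next
  case (profinite t)
  then have "t M = r"
    using v(2) \<open>0 < M\<close> by (simp add: nhat_of_zhat_def Nhat_index_def)
  then show ?thesis
    using that(2) profinite by blast
qed

lemma limitin_Nhat_nhat_of:
  assumes s: "s \<in> Zhat" and pos: "\<forall>i. 0 < ns i" and inf: "filterlim ns at_top sequentially"
    and ev: "\<forall>q>0. eventually (\<lambda>i. ns i mod q = s q) sequentially"
  shows "limitin Nhat_top (\<lambda>i. nhat_of (ns i)) (nhat_of_zhat s) sequentially"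
proof -
  have "(\<lambda>(m, n). discrete_topology (Zmn m n)) = (\<lambda>p. discrete_topology (case_prod Zmn p))"
    by (rule ext) (simp split: prod.split)
  then have Nhat_top_eq:
    "Nhat_top = subtopology (product_topology (\<lambda>p. discrete_topology (case_prod Zmn p)) Nhat_index) Nhat"
    unfolding Nhat_top_def by simp
  have "Nhat \<subseteq> PiE Nhat_index (case_prod Zmn)"
    using Nhat_PiE by blast
  note limitin_iff = limitin_subtopology_product_discrete[OF this, of "\<lambda>i. nhat_of (ns i)"]
  have "eventually (\<lambda>i. nhat_of (ns i) (m, n) = nhat_of_zhat s (m, n)) sequentially"
    if "0 < m" "0 < n" for m n
  proof -
    have "eventually (\<lambda>i. m \<le> ns i) sequentially"
      using inf by (simp add: filterlim_at_top)
    moreover have "eventually (\<lambda>i. ns i mod n = s n) sequentially"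
      using ev \<open>0 < n\<close> by blast
    ultimately show ?thesis
      by eventually_elim (use that in \<open>simp add: nhat_of_def nhat_of_zhat_def Nhat_index_def pi_mn_def\<close>)
  qed
  then show ?thesis
    unfolding Nhat_top_eq limitin_iff[OF nhat_of_in_Nhat[OF pos[rule_format]]]
    using nhat_of_zhat_in_Nhat[OF s] by (auto simp: Nhat_index_def)
qed

definition profinite_tendsto :: "(nat \<Rightarrow> 'a::topological_space) \<Rightarrow> (nat \<Rightarrow> nat) \<Rightarrow> 'a \<Rightarrow> bool" where
  "profinite_tendsto a s l \<longleftrightarrow> (\<forall>ns. (\<forall>i. 0 < ns i) \<and> filterlim ns at_top sequentially \<and>
      (\<forall>q>0. eventually (\<lambda>i. ns i mod q = s q) sequentially) \<longrightarrow> (\<lambda>i. a (ns i)) \<longlonglongrightarrow> l)"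

lemma profinite_tendstoD:
  assumes "profinite_tendsto a s l" "\<forall>i. 0 < ns i" "filterlim ns at_top sequentially"
    "\<forall>q>0. eventually (\<lambda>i. ns i mod q = s q) sequentially"
  shows "(\<lambda>i. a (ns i)) \<longlonglongrightarrow> l"
  using assms unfolding profinite_tendsto_def by blast

lemma profinite_tendsto_of_continuous_extension:
  assumes g: "continuous_map Nhat_top euclidean g" and g_nat: "\<forall>k>0. g (nhat_of k) = a k"
    and s: "s \<in> Zhat"
  shows "profinite_tendsto a s (g (nhat_of_zhat s))"
  unfolding profinite_tendsto_def
proof (intro allI impI, elim conjE)
  fix ns :: "nat \<Rightarrow> nat"
  assume pos: "\<forall>i. 0 < ns i" and inf: "filterlim ns at_top sequentially"
    and ev: "\<forall>q>0. eventually (\<lambda>i. ns i mod q = s q) sequentially"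
  show "(\<lambda>i. a (ns i)) \<longlonglongrightarrow> g (nhat_of_zhat s)"
    using continuous_map_limit[OF g limitin_Nhat_nhat_of[OF s pos inf ev]] g_nat pos
    by (simp add: o_def)
qed

lemma profinite_tendsto_uniformly:
  fixes a :: "nat \<Rightarrow> 'a::metric_space"
  assumes s: "s \<in> Zhat" and "0 < e" and lim: "profinite_tendsto a s l"
  shows "\<exists>N. \<forall>n. N < n \<and> n mod fact N = s (fact N) \<longrightarrow> dist (a n) l < e"
proof (rule ccontr)
  assume "\<not> ?thesis"
  then have "\<forall>N. \<exists>n. N < n \<and> n mod fact N = s (fact N) \<and> \<not> dist (a n) l < e"
    by blast
  then obtain ns where ns: "\<And>N. N < ns N" "\<And>N. ns N mod fact N = s (fact N)"
    "\<And>N. \<not> dist (a (ns N)) l < e"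
    by metis
  have mod_eq: "ns i mod q = s q" if "0 < q" "q \<le> i" for q i
  proof -
    have q_dvd: "q dvd fact i"
      using that by (intro dvd_fact) auto
    then have "ns i mod q = s (fact i) mod q"
      using ns(2) by (metis mod_mod_cancel)
    also have "\<dots> = s q"
      using Zhat_mod[OF s \<open>0 < q\<close> _ q_dvd] by simp
    finally show ?thesis .
  qed
  have ev: "\<forall>q>0. eventually (\<lambda>i. ns i mod q = s q) sequentially"
  proof (intro allI impI)
    fix q :: nat
    assume "0 < q"
    show "eventually (\<lambda>i. ns i mod q = s q) sequentially"
      by (rule eventually_sequentiallyI[of q]) (rule mod_eq[OF \<open>0 < q\<close>])
  qed
  have pos: "\<forall>i. 0 < ns i"
    using ns(1) by (metis gr0I not_less0)
  have "eventually (\<lambda>i. dist (a (ns i)) l < e) sequentially"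
    using profinite_tendstoD[OF lim pos filterlim_at_top_greater_id[OF ns(1)] ev] \<open>0 < e\<close>
    by (rule tendstoD)
  then show False
    using ns(3) by (simp add: eventually_sequentially)
qed

lemma profinite_limit_dist_le:
  fixes a :: "nat \<Rightarrow> 'a::metric_space"
  assumes t: "t \<in> Zhat" and "0 < M" and lim: "profinite_tendsto a t l"
    and close: "\<And>n. N < n \<Longrightarrow> n mod M = t M \<Longrightarrow> dist (a n) c \<le> e"
  shows "dist l c \<le> e"
proof -
  obtain ns where ns: "\<forall>i. 0 < ns i" "filterlim ns at_top sequentially"
    "\<forall>q>0. eventually (\<lambda>i. ns i mod q = t q) sequentially"
    using Zhat_approximating_seq[OF t] .
  have "eventually (\<lambda>i. N < ns i) sequentially"
    using eventually_compose_filterlim[OF eventually_gt_at_top ns(2)] .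
  moreover have "eventually (\<lambda>i. ns i mod M = t M) sequentially"
    using ns(3) \<open>0 < M\<close> by blast
  ultimately have "eventually (\<lambda>i. dist (a (ns i)) c \<le> e) sequentially"
    by eventually_elim (rule close)
  then show ?thesis
    by (rule tendsto_upperbound[OF tendsto_dist[OF profinite_tendstoD[OF lim ns] tendsto_const]]) simp
qed

lemma profinite_tendsto_locally_uniform:
  fixes a :: "nat \<Rightarrow> 'a::metric_space"
  assumes lim: "\<And>t. t \<in> Zhat \<Longrightarrow> profinite_tendsto a t (L t)" and s: "s \<in> Zhat" and "0 < e"
  shows "\<exists>N. (\<forall>n. N < n \<and> n mod fact N = s (fact N) \<longrightarrow> dist (a n) (L s) < e) \<and>
    (\<forall>t\<in>Zhat. t (fact N) = s (fact N) \<longrightarrow> dist (L t) (L s) < e)"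
proof -
  obtain N where N: "\<forall>n. N < n \<and> n mod fact N = s (fact N) \<longrightarrow> dist (a n) (L s) < e / 2"
    using profinite_tendsto_uniformly[OF s half_gt_zero[OF \<open>0 < e\<close>] lim[OF s]] by blast
  have "dist (L t) (L s) < e" if t: "t \<in> Zhat" "t (fact N) = s (fact N)" for t
  proof -
    have "dist (a n) (L s) \<le> e / 2" if "N < n" "n mod fact N = t (fact N)" for n
      using N[rule_format, of n] that t(2) by simp
    then have "dist (L t) (L s) \<le> e / 2"
      by (rule profinite_limit_dist_le[OF t(1) fact_gt_zero lim[OF t(1)]])
    then show ?thesis
      using \<open>0 < e\<close> by simp
  qed
  moreover have "dist (a n) (L s) < e" if "N < n" "n mod fact N = s (fact N)" for n
    using N[rule_format, of n] that \<open>0 < e\<close> by simp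
  ultimately show ?thesis
    by blast
qed

definition Nhat_extension :: "(nat \<Rightarrow> 'a) \<Rightarrow> ((nat \<Rightarrow> nat) \<Rightarrow> 'a) \<Rightarrow> (nat \<times> nat \<Rightarrow> nat + nat) \<Rightarrow> 'a"
  where "Nhat_extension a L u = (if u \<in> nhat_of ` {0<..} then a (inv_into {0<..} nhat_of u)
      else L (inv_into Zhat nhat_of_zhat u))"

lemma Nhat_extension_nhat_of: "0 < k \<Longrightarrow> Nhat_extension a L (nhat_of k) = a k"
  by (simp add: Nhat_extension_def inv_into_f_f[OF inj_on_nhat_of])

lemma Nhat_extension_nhat_of_zhat:
  assumes "s \<in> Zhat"
  shows "Nhat_extension a L (nhat_of_zhat s) = L s"
proof -
  have "nhat_of_zhat s \<notin> nhat_of ` {0<..}"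
    using nhat_of_zhat_neq_nhat_of by blast
  then show ?thesis
    by (simp add: Nhat_extension_def inv_into_f_f[OF inj_on_nhat_of_zhat assms])
qed

lemma Nhat_extension_near_profinite:
  fixes a :: "nat \<Rightarrow> 'a::metric_space"
  assumes lim: "\<And>t. t \<in> Zhat \<Longrightarrow> profinite_tendsto a t (L t)" and s: "s \<in> Zhat" and "0 < e"
  shows "\<exists>U. openin Nhat_top U \<and> nhat_of_zhat s \<in> U \<and>
    (\<forall>v\<in>U. dist (L s) (Nhat_extension a L v) < e)"
proof -
  obtain N where
    N_nat: "\<And>n. N < n \<Longrightarrow> n mod fact N = s (fact N) \<Longrightarrow> dist (a n) (L s) < e" and
    N_profinite: "\<And>t. t \<in> Zhat \<Longrightarrow> t (fact N) = s (fact N) \<Longrightarrow> dist (L t) (L s) < e"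
    using profinite_tendsto_locally_uniform[OF lim s \<open>0 < e\<close>] by blast
  let ?U = "{v \<in> Nhat. v (Suc N, fact N) = Inr (s (fact N))}"
  have "dist (L s) (Nhat_extension a L v) < e"
    if "v \<in> Nhat" "v (Suc N, fact N) = Inr (s (fact N))" for v
    using that fact_gt_zero
  proof (cases rule: Nhat_neighbourhood_cases)
    case (nat n)
    then show ?thesis
      using N_nat Nhat_extension_nhat_of[of n a L] by (simp add: dist_commute)
  next
    case (profinite t)
    then show ?thesis
      using N_profinite[OF \<open>t \<in> Zhat\<close> \<open>t (fact N) = s (fact N)\<close>] Nhat_extension_nhat_of_zhat[of t a L]
      by (simp add: dist_commute)
  qed
  moreover have "openin Nhat_top ?U"
    by (rule openin_Nhat_coordinate) (simp add: Nhat_index_def)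
  moreover have "nhat_of_zhat s \<in> ?U"
    using nhat_of_zhat_in_Nhat[OF s] by (simp add: nhat_of_zhat_def Nhat_index_def)
  ultimately show ?thesis
    by blast
qed

lemma continuous_map_Nhat_extension:
  fixes a :: "nat \<Rightarrow> 'a::metric_space"
  assumes lim: "\<And>s. s \<in> Zhat \<Longrightarrow> profinite_tendsto a s (L s)"
  shows "continuous_map Nhat_top euclidean (Nhat_extension a L)"
proof -
  have "\<exists>U. openin Nhat_top U \<and> u \<in> U \<and>
      (\<forall>v\<in>U. dist (Nhat_extension a L u) (Nhat_extension a L v) < e)"
    if "u \<in> Nhat" "0 < e" for u e
    using \<open>u \<in> Nhat\<close>
  proof (cases rule: Nhat_cases)
    case (nat k)
    then show ?thesis
      using openin_Nhat_nhat_of[OF \<open>0 < k\<close>] \<open>0 < e\<close> by (intro exI[of _ "{u}"]) simp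
  next
    case (profinite s)
    then show ?thesis
      using Nhat_extension_near_profinite[OF lim \<open>s \<in> Zhat\<close> \<open>0 < e\<close>]
      by (simp add: Nhat_extension_nhat_of_zhat)
  qed
  then have "continuous_map Nhat_top Met_TC.mtopology (Nhat_extension a L)"
    unfolding Met_TC.continuous_map_to_metric mball_eq_ball mem_ball topspace_Nhat by blast
  then show ?thesis
    by simp
qed

lemma profinite_tendsto_iff_limitin:
  assumes "s \<in> Zhat"
  shows "profinite_tendsto a s l \<longleftrightarrow> (\<forall>ns. (\<forall>i. 0 < ns i) \<and> filterlim ns at_top sequentially \<and>
      limitin Zhat_top (\<lambda>i. zhat_of (ns i)) s sequentially \<longrightarrow> (\<lambda>i. a (ns i)) \<longlonglongrightarrow> l)"
  using assms unfolding profinite_tendsto_def limitin_Zhat_zhat_of_iff by simp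

theorem continuous_extension_to_Nhat_iff:
  fixes a :: "nat \<Rightarrow> 'a::metric_space"
  shows "(\<exists>g. continuous_map Nhat_top euclidean g \<and> (\<forall>k::nat. 0 < k \<longrightarrow> g (nhat_of k) = a k))
     \<longleftrightarrow> (\<forall>s\<in>Zhat. \<exists>L. \<forall>ns :: nat \<Rightarrow> nat.
              (\<forall>i. 0 < ns i) \<and> filterlim ns at_top sequentially \<and>
              limitin Zhat_top (\<lambda>i. zhat_of (ns i)) s sequentially
              \<longrightarrow> (\<lambda>i. a (ns i)) \<longlonglongrightarrow> L)"
proof -
  have "(\<exists>g. continuous_map Nhat_top euclidean g \<and> (\<forall>k>0. g (nhat_of k) = a k)) \<longleftrightarrow>
      (\<forall>s\<in>Zhat. \<exists>L. profinite_tendsto a s L)"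
  proof
    assume "\<forall>s\<in>Zhat. \<exists>L. profinite_tendsto a s L"
    then obtain L where "\<And>s. s \<in> Zhat \<Longrightarrow> profinite_tendsto a s (L s)"
      by metis
    then show "\<exists>g. continuous_map Nhat_top euclidean g \<and> (\<forall>k>0. g (nhat_of k) = a k)"
      using continuous_map_Nhat_extension Nhat_extension_nhat_of by blast
  qed (use profinite_tendsto_of_continuous_extension in blast)
  then show ?thesis
    by (simp add: profinite_tendsto_iff_limitin)
qed

theorem corollary2p3:
  fixes f :: "'a::{metric_space, complete_space} \<Rightarrow> 'a" and x :: 'a
  assumes "continuous_on UNIV f"
  shows "(\<exists>g. continuous_map Nhat_top euclidean g \<and>
              (\<forall>k::nat. 0 < k \<longrightarrow> g (nhat_of k) = (f ^^ k) x))
     \<longleftrightarrow>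
         (\<forall>s\<in>Zhat. \<exists>L. \<forall>ns :: nat \<Rightarrow> nat.
              (\<forall>i. 0 < ns i) \<and> filterlim ns at_top sequentially \<and>
              limitin Zhat_top (\<lambda>i. zhat_of (ns i)) s sequentially
              \<longrightarrow> ((\<lambda>i. (f ^^ ns i) x) \<longlonglongrightarrow> L))"
  by (rule continuous_extension_to_Nhat_iff)

end
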